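(* Let $k\geq 1$ be an integer. Then (a) there exist $v$ and a connected symmetric configuration $v_3$ whose minimum blocking set cardinality is exactly $\lceil v/3\rceil+k$; and (b) there exist $v$ and a connected symmetric configuration $v_3$ whose minimum blocking set cardinality is exactly $\lfloor v/2\rfloor-k$.
   Context: A symmetric configuration $v_3$ consists of a set of $v$ points and a collection of $v$ blocks, each block being a 3-element subset of the points, such that every point lies in exactly 3 blocks and any two distinct points lie in at most one common block; it is connected if it is not the union of two configurations on disjoint nonempty point sets. A blocking set is a subset $Q$ of the points such that every block contains at least one point of $Q$ and at least one point not in $Q$; the minimum blocking set cardinality is the smallest cardinality of a blocking set. *)

theory Defs
  imports Complex_Main
begin

text \<open>Blocks are 3-element subsets of P; since two distinct points lie in at most one
  block, distinct blocks are distinct sets, so B is a set of sets.\<close>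
definition sym_config :: "'a set \<Rightarrow> 'a set set \<Rightarrow> bool" where
  "sym_config P B \<longleftrightarrow>
     finite P \<and> card B = card P \<and>
     (\<forall>b\<in>B. b \<subseteq> P \<and> card b = 3) \<and>
     (\<forall>p\<in>P. card {b\<in>B. p \<in> b} = 3) \<and>
     (\<forall>p\<in>P. \<forall>q\<in>P. p \<noteq> q \<longrightarrow> card {b\<in>B. p \<in> b \<and> q \<in> b} \<le> 1)"

definition connected_config :: "'a set \<Rightarrow> 'a set set \<Rightarrow> bool" where
  "connected_config P B \<longleftrightarrow>
     sym_config P B \<and>
     \<not> (\<exists>P1 B1 P2 B2. sym_config P1 B1 \<and> sym_config P2 B2 \<and>
          P1 \<noteq> {} \<and> P2 \<noteq> {} \<and> P1 \<inter> P2 = {} \<and>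
          P = P1 \<union> P2 \<and> B = B1 \<union> B2)"

definition blocking_set :: "'a set \<Rightarrow> 'a set set \<Rightarrow> 'a set \<Rightarrow> bool" where
  "blocking_set P B Q \<longleftrightarrow> Q \<subseteq> P \<and>
     (\<forall>b\<in>B. b \<inter> Q \<noteq> {} \<and> b - Q \<noteq> {})"

definition min_blocking_card :: "'a set \<Rightarrow> 'a set set \<Rightarrow> nat \<Rightarrow> bool" where
  "min_blocking_card P B m \<longleftrightarrow>
     (\<exists>Q. blocking_set P B Q \<and> card Q = m) \<and>
     (\<forall>Q. blocking_set P B Q \<longrightarrow> m \<le> card Q)"

end

theory Submission
  imports Defs "HOL-Library.Nat_Bijection"
begin

text \<open>Take m copies of the Fano plane, delete the line {0, 2, 6} from each copy, and replace
  the deleted lines by the m "link" lines through point 0 of copy j, point 2 of copy j + 1 and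
  point 6 of copy j + 2 (indices mod m).
  A blocking set must meet the six remaining lines of every copy, and two points of the Fano
  plane always miss one of them, so it contains at least 3 points of each copy. Conversely,
  taking the deleted line in even copies and the triangle {1, 3, 4} in odd copies blocks every
  line: the copy lines are split by both choices, and each link line sees two consecutive
  copies of different parity. So the minimum is 3m, and choosing m = 3k/2 or 3(k-1)/2 + 2
  (resp. m = 2k) gives 3m = \<lceil>7m/3\<rceil> + k (resp. 3m = \<lfloor>7m/2\<rfloor> - k).\<close>

section \<open>Configurations and injective images\<close>

definition block_connected :: "'a set \<Rightarrow> 'a set set \<Rightarrow> bool" where
  "block_connected P B \<longleftrightarrow>
     (\<forall>S \<subseteq> P. (\<forall>b\<in>B. b \<inter> S \<noteq> {} \<longrightarrow> b \<subseteq> S) \<longrightarrow> S = {} \<or> S = P)"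

lemma connected_configI:
  assumes "sym_config P B" and "block_connected P B"
  shows "connected_config P B"
  unfolding connected_config_def
proof (intro conjI notI)
  assume "\<exists>P1 B1 P2 B2. sym_config P1 B1 \<and> sym_config P2 B2 \<and> P1 \<noteq> {} \<and> P2 \<noteq> {} \<and>
            P1 \<inter> P2 = {} \<and> P = P1 \<union> P2 \<and> B = B1 \<union> B2"
  then obtain P1 B1 P2 B2 where
    conf: "sym_config P1 B1" "sym_config P2 B2" and parts: "P1 \<noteq> {}" "P2 \<noteq> {}"
    "P1 \<inter> P2 = {}" "P = P1 \<union> P2" "B = B1 \<union> B2" by blast
  have "b \<subseteq> P1" if "b \<in> B1" for b using conf(1) that by (simp add: sym_config_def)
  moreover have "b \<subseteq> P2" if "b \<in> B2" for b using conf(2) that by (simp add: sym_config_def)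
  ultimately have "\<forall>b\<in>B. b \<inter> P1 \<noteq> {} \<longrightarrow> b \<subseteq> P1" using parts(3,5) by blast
  with assms(2) parts(4) have "P1 = {} \<or> P1 = P"
    unfolding block_connected_def by blast
  with parts(1-4) show False by blast
qed (fact assms(1))

lemma sym_config_family:
  assumes "finite P" "finite I" "card I = card P"
    and blocks: "\<And>i. i \<in> I \<Longrightarrow> blk i \<subseteq> P \<and> card (blk i) = 3"
    and through: "\<And>p. p \<in> P \<Longrightarrow> card {i \<in> I. p \<in> blk i} = 3"
    and unique: "\<And>p q i i'. p \<noteq> q \<Longrightarrow> i \<in> I \<Longrightarrow> i' \<in> I \<Longrightarrow>
                   {p, q} \<subseteq> blk i \<Longrightarrow> {p, q} \<subseteq> blk i' \<Longrightarrow> i = i'"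
  shows "sym_config P (blk ` I)"
proof -
  have inj: "inj_on blk I"
  proof (rule inj_onI)
    fix i i' assume i: "i \<in> I" "i' \<in> I" and eq: "blk i = blk i'"
    obtain p q r where "blk i = {p, q, r}" "p \<noteq> q"
      using blocks[OF i(1)] by (auto simp: card_3_iff)
    with unique[OF _ i] eq show "i = i'" by auto
  qed
  have image_through: "{b \<in> blk ` I. Q \<subseteq> b} = blk ` {i \<in> I. Q \<subseteq> blk i}" for Q
    by auto
  have card_through: "card {b \<in> blk ` I. Q \<subseteq> b} = card {i \<in> I. Q \<subseteq> blk i}" for Q
    unfolding image_through by (rule card_image) (rule inj_on_subset[OF inj], auto)
  show ?thesis
    unfolding sym_config_def
  proof (intro conjI ballI impI)
    show "card (blk ` I) = card P" using card_image[OF inj] assms(3) by simp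
  next
    fix b assume "b \<in> blk ` I"
    then show "b \<subseteq> P" "card b = 3" using blocks by blast+
  next
    fix p assume "p \<in> P"
    then show "card {b \<in> blk ` I. p \<in> b} = 3"
      using card_through[of "{p}"] through by simp
  next
    fix p q assume "p \<in> P" "q \<in> P" "p \<noteq> q"
    have "card {i \<in> I. {p, q} \<subseteq> blk i} \<le> 1"
      using unique[OF \<open>p \<noteq> q\<close>] assms(2) by (simp add: card_le_Suc0_iff_eq)
    then show "card {b \<in> blk ` I. p \<in> b \<and> q \<in> b} \<le> 1"
      using card_through[of "{p, q}"] by simp
  qed (fact assms(1))
qed

lemma sym_config_image:
  assumes conf: "sym_config P B" and inj: "inj_on f P"
  shows "sym_config (f ` P) ((`) f ` B)"
proof -
  have sub: "b \<subseteq> P" if "b \<in> B" for b using conf that unfolding sym_config_def by blast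
  have fin: "finite P" using conf unfolding sym_config_def by blast
  have inj_B: "inj_on ((`) f) B"
    by (rule inj_on_subset[OF inj_on_image_Pow[OF inj]]) (auto dest: sub)
  have image_le_image_iff: "f ` Q \<subseteq> f ` b \<longleftrightarrow> Q \<subseteq> b" if "Q \<subseteq> P" "b \<in> B" for Q b
    using inj_on_image_set_diff[OF inj, of Q b] sub[OF that(2)] that(1)
    by (metis Diff_eq_empty_iff Diff_subset image_is_empty subset_trans)
  have through: "{b' \<in> (`) f ` B. f ` Q \<subseteq> b'} = (`) f ` {b \<in> B. Q \<subseteq> b}" if "Q \<subseteq> P" for Q
    using image_le_image_iff[OF that] by blast
  have card_through: "card {b' \<in> (`) f ` B. f ` Q \<subseteq> b'} = card {b \<in> B. Q \<subseteq> b}"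
    if "Q \<subseteq> P" for Q
    unfolding through[OF that] by (rule card_image) (rule inj_on_subset[OF inj_B], auto)
  show ?thesis
    unfolding sym_config_def
  proof (intro conjI ballI impI)
    show "card ((`) f ` B) = card (f ` P)"
      using card_image[OF inj_B] card_image[OF inj] conf unfolding sym_config_def by simp
  next
    fix b' assume "b' \<in> (`) f ` B"
    then obtain b where b: "b \<in> B" "b' = f ` b" by blast
    then show "b' \<subseteq> f ` P" using sub by blast
    show "card b' = 3"
      using b card_image[OF inj_on_subset[OF inj sub[OF b(1)]]] conf
      unfolding sym_config_def by simp
  next
    fix p' assume "p' \<in> f ` P"
    then obtain p where "p \<in> P" "p' = f p" by blast
    then show "card {b' \<in> (`) f ` B. p' \<in> b'} = 3"
      using card_through[of "{p}"] conf unfolding sym_config_def by simp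
  next
    fix p' q' assume "p' \<in> f ` P" "q' \<in> f ` P" "p' \<noteq> q'"
    then obtain p q where "p \<in> P" "q \<in> P" "p \<noteq> q" "p' = f p" "q' = f q" by blast
    then show "card {b' \<in> (`) f ` B. p' \<in> b' \<and> q' \<in> b'} \<le> 1"
      using card_through[of "{p, q}"] conf unfolding sym_config_def by simp
  qed (use fin in simp)
qed

lemma block_connected_image:
  assumes conn: "block_connected P B" and sub: "\<forall>b\<in>B. b \<subseteq> P" and inj: "inj_on f P"
  shows "block_connected (f ` P) ((`) f ` B)"
  unfolding block_connected_def
proof (intro allI impI)
  fix S assume S: "S \<subseteq> f ` P" and closed: "\<forall>b'\<in>(`) f ` B. b' \<inter> S \<noteq> {} \<longrightarrow> b' \<subseteq> S"
  let ?T = "{p \<in> P. f p \<in> S}"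
  have "?T \<subseteq> P \<longrightarrow> (\<forall>b\<in>B. b \<inter> ?T \<noteq> {} \<longrightarrow> b \<subseteq> ?T) \<longrightarrow> ?T = {} \<or> ?T = P"
    using conn unfolding block_connected_def by blast
  moreover have "\<forall>b\<in>B. b \<inter> ?T \<noteq> {} \<longrightarrow> b \<subseteq> ?T"
  proof (intro ballI impI)
    fix b assume "b \<in> B" "b \<inter> ?T \<noteq> {}"
    then have "f ` b \<inter> S \<noteq> {}" by blast
    then have "f ` b \<subseteq> S" using closed \<open>b \<in> B\<close> by blast
    with \<open>b \<in> B\<close> sub show "b \<subseteq> ?T" by blast
  qed
  ultimately have "?T = {} \<or> ?T = P" by blast
  moreover have "S = f ` ?T" using S by auto
  ultimately show "S = {} \<or> S = f ` P" by auto
qed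

lemma blocking_set_image_iff:
  assumes sub: "\<forall>b\<in>B. b \<subseteq> P" and inj: "inj_on f P" and "Q \<subseteq> P"
  shows "blocking_set (f ` P) ((`) f ` B) (f ` Q) \<longleftrightarrow> blocking_set P B Q"
proof -
  have block_iff: "f ` b \<inter> f ` Q \<noteq> {} \<and> f ` b - f ` Q \<noteq> {} \<longleftrightarrow> b \<inter> Q \<noteq> {} \<and> b - Q \<noteq> {}"
    if "b \<in> B" for b
  proof -
    have "b \<subseteq> P" using sub that by blast
    then have "f ` b \<inter> f ` Q = f ` (b \<inter> Q)" "f ` b - f ` Q = f ` (b - Q)"
      using inj_on_image_Int[OF inj, of b Q] inj_on_image_set_diff[OF inj, of b Q] \<open>Q \<subseteq> P\<close>
      by auto
    then show ?thesis by (simp only: image_is_empty)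
  qed
  show ?thesis
    unfolding blocking_set_def Ball_image_comp comp_def
    by (simp only: block_iff image_mono[OF \<open>Q \<subseteq> P\<close>] \<open>Q \<subseteq> P\<close> simp_thms cong: ball_cong)
qed

lemma min_blocking_card_image:
  assumes min: "min_blocking_card P B m" and sub: "\<forall>b\<in>B. b \<subseteq> P" and inj: "inj_on f P"
  shows "min_blocking_card (f ` P) ((`) f ` B) m"
  unfolding min_blocking_card_def
proof (intro conjI allI impI)
  obtain Q where Q: "blocking_set P B Q" "card Q = m" using min unfolding min_blocking_card_def by blast
  then have "Q \<subseteq> P" unfolding blocking_set_def by blast
  with Q show "\<exists>Q'. blocking_set (f ` P) ((`) f ` B) Q' \<and> card Q' = m"
    using blocking_set_image_iff[OF sub inj] card_image[OF inj_on_subset[OF inj]] by blast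
next
  fix Q' assume Q': "blocking_set (f ` P) ((`) f ` B) Q'"
  then obtain Q where "Q \<subseteq> P" "Q' = f ` Q"
    unfolding blocking_set_def by (auto elim: subset_imageE)
  with Q' have "blocking_set P B Q" "card Q' = card Q"
    using blocking_set_image_iff[OF sub inj] card_image[OF inj_on_subset[OF inj]] by auto
  with min show "m \<le> card Q'" unfolding min_blocking_card_def by simp
qed

section \<open>The Fano plane\<close>

text \<open>The lines are the translates of the difference set {0, 1, 3} modulo 7. The six lines
  fano_line t with t < 6 are kept in every copy of the chain below; fano_line 6 is deleted.\<close>

definition fano_line :: "nat \<Rightarrow> nat set" where
  "fano_line t = {t mod 7, (t + 1) mod 7, (t + 3) mod 7}"

lemma fano_line_values:
  "fano_line 0 = {0, 1, 3}" "fano_line 1 = {1, 2, 4}" "fano_line 2 = {2, 3, 5}"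
  "fano_line 3 = {3, 4, 6}" "fano_line 4 = {4, 5, 0}" "fano_line 5 = {5, 6, 1}"
  "fano_line 6 = {6, 0, 2}"
  by (auto simp: fano_line_def)

lemma below_seven_cases:
  assumes "t < (7::nat)"
  obtains "t = 0" | "t = 1" | "t = 2" | "t = 3" | "t = 4" | "t = 5" | "t = 6"
  using assms by linarith

lemma lessThan_six: "{..<6::nat} = {0, 1, 2, 3, 4, 5}"
  by auto

lemma fano_line_subset: "fano_line t \<subseteq> {..<7}"
  by (auto simp: fano_line_def)

lemma card_fano_line:
  assumes "t < 7" shows "card (fano_line t) = 3"
  using assms by (cases rule: below_seven_cases) (simp_all add: fano_line_def)

lemma fano_lines_meet:
  assumes "t < 7" "t' < 7" "t \<noteq> t'"
  obtains x where "fano_line t \<inter> fano_line t' = {x}"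
  using assms(1) apply (cases rule: below_seven_cases)
  using assms(2) by (cases rule: below_seven_cases; use assms in \<open>simp add: fano_line_def\<close>)+

lemma fano_line_unique:
  assumes "t < 7" "t' < 7" "r \<noteq> r'" "{r, r'} \<subseteq> fano_line t" "{r, r'} \<subseteq> fano_line t'"
  shows "t = t'"
proof (rule ccontr)
  assume "t \<noteq> t'"
  then obtain x where "fano_line t \<inter> fano_line t' = {x}" using fano_lines_meet assms(1,2) by blast
  with assms(4,5) have "r = x" "r' = x" by auto
  with assms(3) show False by simp
qed

lemma lines_through_point:
  assumes "r < 7"
  shows "card {t. t < 6 \<and> r \<in> fano_line t} + (if r \<in> fano_line 6 then 1 else 0) = 3"
proof -
  have "card {t. t < 6 \<and> r \<in> fano_line t} = (\<Sum>t<6. if r \<in> fano_line t then 1 else 0)"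
    by (simp add: sum.If_cases Int_def conj_commute)
  also have "\<dots> = 3 - (if r \<in> fano_line 6 then 1 else 0)"
    using assms by (cases rule: below_seven_cases) (simp_all add: fano_line_def lessThan_six)
  finally show ?thesis by (simp add: fano_line_def)
qed

lemma point_on_kept_line:
  assumes "r < 7" obtains t where "t < 6" "r \<in> fano_line t"
proof
  show "r \<in> fano_line (if r < 6 then r else 3)"
    using assms by (simp add: fano_line_def)
qed simp

lemma line_avoiding_two_points:
  assumes "x < 7" "y < 7" obtains t where "t < 6" "fano_line t \<inter> {x, y} = {}"
proof -
  have "\<exists>t\<in>{0, 1, 2, 3, 4, 5}. fano_line t \<inter> {x, y} = {}"
    using assms(1) apply (cases rule: below_seven_cases)
    using assms(2) by (cases rule: below_seven_cases; simp only: fano_line_values bex_simps; simp)+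
  then obtain t where t: "t \<in> {0, 1, 2, 3, 4, 5}" "fano_line t \<inter> {x, y} = {}" ..
  show thesis by (rule that[OF _ t(2)]) (use t(1) in auto)
qed

lemma card_le_two_cover:
  assumes "finite S" "S \<noteq> {}" "card S \<le> 2"
  obtains x y where "x \<in> S" "y \<in> S" "S \<subseteq> {x, y}"
proof -
  have "card S \<noteq> 0" using assms(1,2) by simp
  then consider "card S = 1" | "card S = 2" using assms(3) by linarith
  then show thesis using that by cases (auto simp: card_1_singleton_iff card_2_iff)
qed

lemma three_le_card_if_meets_kept_lines:
  assumes sub: "S \<subseteq> {..<7}" and meets: "\<And>t. t < 6 \<Longrightarrow> fano_line t \<inter> S \<noteq> {}"
  shows "3 \<le> card S"
proof (rule ccontr)
  assume "\<not> 3 \<le> card S"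
  then have "card S \<le> 2" by simp
  moreover have "finite S" "S \<noteq> {}" using finite_subset[OF sub] meets[of 0] by auto
  ultimately obtain x y where xy: "x \<in> S" "y \<in> S" "S \<subseteq> {x, y}"
    using card_le_two_cover by metis
  obtain t where "t < 6" "fano_line t \<inter> {x, y} = {}"
    using line_avoiding_two_points[of x y] xy(1,2) sub by blast
  with xy(3) meets show False by blast
qed

lemma rotation_preimage:
  fixes m c a :: nat
  assumes "a < m"
  shows "{j. j < m \<and> (j + c) mod m = a} = {(a + m - c mod m) mod m}"
proof -
  define d where "d = c mod m"
  have "d < m" using assms by (simp add: d_def)
  have "(j + c) mod m = a \<longleftrightarrow> j = (a + m - d) mod m" if "j < m" for j
  proof -
    have "(j + c) mod m = (j + d) mod m" by (simp add: d_def mod_add_right_eq)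
    also have "\<dots> = (if j + d < m then j + d else j + d - m)"
      using that \<open>d < m\<close> by (simp add: mod_if le_mod_geq)
    moreover have "(a + m - d) mod m = (if a + m - d < m then a + m - d else a - d)"
      using assms \<open>d < m\<close> by (simp add: mod_if)
    ultimately show ?thesis using that assms \<open>d < m\<close> by auto
  qed
  moreover have "(a + m - d) mod m < m" using assms by simp
  ultimately show ?thesis by (auto simp: d_def)
qed

section \<open>A chain of Fano planes\<close>

text \<open>The pair (j, r) is point r of copy j. The block (j, 6) is the link line that takes the
  place of the deleted line fano_line 6 = {6, 0, 2} of copy j.\<close>

definition chain_points :: "nat \<Rightarrow> (nat \<times> nat) set" where
  "chain_points m = {..<m} \<times> {..<7}"

definition chain_block :: "nat \<Rightarrow> nat \<times> nat \<Rightarrow> (nat \<times> nat) set" where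
  "chain_block m = (\<lambda>(j, t). if t < 6 then {j} \<times> fano_line t
     else {(j, 0), ((j + 1) mod m, 2), ((j + 2) mod m, 6)})"

definition chain_blocks :: "nat \<Rightarrow> (nat \<times> nat) set set" where
  "chain_blocks m = chain_block m ` chain_points m"

lemma chain_block_subset:
  assumes "x \<in> chain_points m" shows "chain_block m x \<subseteq> chain_points m"
  using assms fano_line_subset
  by (fastforce simp: chain_points_def chain_block_def split: if_splits)

lemma card_chain_block:
  assumes "x \<in> chain_points m" shows "card (chain_block m x) = 3"
  using assms card_fano_line by (auto simp: chain_points_def chain_block_def card_cartesian_product)

lemma link_block_ports:
  "(a, r) \<in> chain_block m (j, 6) \<Longrightarrow> r \<in> fano_line 6"
  by (auto simp: chain_block_def fano_line_values)

lemma card_link_blocks_through: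
  assumes "a < m"
  shows "card {j. j < m \<and> (a, r) \<in> chain_block m (j, 6)} = (if r \<in> fano_line 6 then 1 else 0)"
proof -
  have link: "(a, r) \<in> chain_block m (j, 6) \<longleftrightarrow>
      (r = 0 \<and> j = a) \<or> (r = 2 \<and> (j + 1) mod m = a) \<or> (r = 6 \<and> (j + 2) mod m = a)" for j
    by (auto simp: chain_block_def)
  consider "r = 0" | "r = 2" | "r = 6" | "r \<notin> fano_line 6"
    by (auto simp: fano_line_values)
  then show ?thesis
  proof cases
    case 1
    then have "{j. j < m \<and> (a, r) \<in> chain_block m (j, 6)} = {a}" using assms link by auto
    with 1 show ?thesis by (simp add: fano_line_values)
  next
    case 2
    then have "{j. j < m \<and> (a, r) \<in> chain_block m (j, 6)} = {(a + m - 1 mod m) mod m}"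
      using assms link rotation_preimage[of a m 1] by simp
    with 2 show ?thesis by (simp add: fano_line_values)
  next
    case 3
    then have "{j. j < m \<and> (a, r) \<in> chain_block m (j, 6)} = {(a + m - 2 mod m) mod m}"
      using assms link rotation_preimage[of a m 2] by simp
    with 3 show ?thesis by (simp add: fano_line_values)
  next
    case 4
    then show ?thesis using link_block_ports by auto
  qed
qed

lemma card_chain_blocks_through:
  assumes p: "(a, r) \<in> chain_points m"
  shows "card {x \<in> chain_points m. (a, r) \<in> chain_block m x} = 3"
proof -
  let ?T = "{t. t < 6 \<and> r \<in> fano_line t}" and ?J = "{j. j < m \<and> (a, r) \<in> chain_block m (j, 6)}"
  have split: "{x \<in> chain_points m. (a, r) \<in> chain_block m x} = Pair a ` ?T \<union> (\<lambda>j. (j, 6)) ` ?J"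
    using p by (auto simp: chain_points_def chain_block_def split: if_splits)
  have "card (Pair a ` ?T \<union> (\<lambda>j. (j, 6)) ` ?J) = card ?T + card ?J"
    by (subst card_Un_disjoint) (auto simp: card_image inj_on_def)
  then show ?thesis
    using split lines_through_point card_link_blocks_through assms by (simp add: chain_points_def)
qed

lemma copy_line_meets_link_once:
  assumes "t < 6" "{p, q} \<subseteq> chain_block m (j, t)" "{p, q} \<subseteq> chain_block m (j', 6)"
  shows "p = q"
proof -
  obtain r r' where pq: "p = (j, r)" "q = (j, r')" "{r, r'} \<subseteq> fano_line t"
    using assms(1,2) by (auto simp: chain_block_def)
  moreover have "{r, r'} \<subseteq> fano_line 6"
    using assms(3) link_block_ports pq(1,2) by auto
  ultimately show ?thesis
    using fano_line_unique[of t 6 r r'] assms(1) by fastforce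
qed

lemma chain_blocks_meet_once:
  assumes xy: "x \<in> chain_points m" "y \<in> chain_points m" and "p \<noteq> q"
    and pq: "{p, q} \<subseteq> chain_block m x" "{p, q} \<subseteq> chain_block m y"
  shows "x = y"
proof -
  obtain j t j' t' where x: "x = (j, t)" "j < m" "t < 7" and y: "y = (j', t')" "j' < m" "t' < 7"
    using xy by (auto simp: chain_points_def)
  consider "t < 6" "t' < 6" | "t < 6" "t' = 6" | "t = 6" "t' < 6" | "t = 6" "t' = 6"
    using x(3) y(3) by linarith
  then show ?thesis
  proof cases
    case 1
    with pq x(1) y(1) have "{p, q} \<subseteq> {j} \<times> fano_line t" "{p, q} \<subseteq> {j'} \<times> fano_line t'"
      by (simp_all add: chain_block_def)
    then obtain r r' where "p = (j, r)" "q = (j, r')" "j = j'"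
        "{r, r'} \<subseteq> fano_line t" "{r, r'} \<subseteq> fano_line t'"
      by (cases p, cases q) auto
    with fano_line_unique[of t t' r r'] 1 x y \<open>p \<noteq> q\<close> show ?thesis by auto
  next
    case 2
    with pq x(1) y(1) have "p = q" by (intro copy_line_meets_link_once[of t p q m j j']) auto
    with \<open>p \<noteq> q\<close> show ?thesis ..
  next
    case 3
    with pq x(1) y(1) have "p = q" by (intro copy_line_meets_link_once[of t' p q m j' j]) auto
    with \<open>p \<noteq> q\<close> show ?thesis ..
  next
    case 4
    obtain a r where p: "p = (a, r)" "a < m"
      using pq(1) chain_block_subset[OF xy(1)] by (cases p) (auto simp: chain_points_def)
    let ?J = "{j. j < m \<and> (a, r) \<in> chain_block m (j, 6)}"
    have "card ?J \<le> 1" using card_link_blocks_through[OF p(2)] by simp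
    moreover have "j \<in> ?J" "j' \<in> ?J"
      using pq x y unfolding 4 p(1) by simp_all
    ultimately have "j = j'" by (auto simp: card_le_Suc0_iff_eq)
    with 4 x(1) y(1) show ?thesis by simp
  qed
qed

lemma sym_config_chain: "sym_config (chain_points m) (chain_blocks m)"
  unfolding chain_blocks_def
proof (rule sym_config_family)
  show "finite (chain_points m)" by (simp add: chain_points_def)
qed (use chain_block_subset card_chain_block card_chain_blocks_through chain_blocks_meet_once
      in \<open>auto simp: chain_points_def\<close>)

lemma block_connected_chain: "block_connected (chain_points m) (chain_blocks m)"
  unfolding block_connected_def
proof (intro allI impI)
  fix S assume S: "S \<subseteq> chain_points m"
    and closed: "\<forall>b\<in>chain_blocks m. b \<inter> S \<noteq> {} \<longrightarrow> b \<subseteq> S"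
  have same_block: "p \<in> S \<longleftrightarrow> q \<in> S" if "x \<in> chain_points m" "p \<in> chain_block m x" "q \<in> chain_block m x"
    for x p q
  proof -
    have "chain_block m x \<in> chain_blocks m" using that(1) unfolding chain_blocks_def by blast
    with closed have "p \<in> S \<Longrightarrow> chain_block m x \<subseteq> S" "q \<in> S \<Longrightarrow> chain_block m x \<subseteq> S"
      using that(2,3) by blast+
    with that(2,3) show ?thesis by blast
  qed
  have same_line: "(j, r) \<in> S \<longleftrightarrow> (j, r') \<in> S"
    if "j < m" "t < 6" "r \<in> fano_line t" "r' \<in> fano_line t" for j t r r'
    using same_block[of "(j, t)"] that by (simp add: chain_points_def chain_block_def)
  have same_copy: "(j, r) \<in> S \<longleftrightarrow> (j, 0) \<in> S" if "j < m" "r < 7" for j r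
  proof -
    obtain t where t: "t < 6" "r \<in> fano_line t" using point_on_kept_line[OF \<open>r < 7\<close>] .
    have "0 \<in> fano_line 0" by (simp add: fano_line_def)
    show ?thesis
    proof (cases "t = 0")
      case True
      with t same_line[OF \<open>j < m\<close> _ _ \<open>0 \<in> fano_line 0\<close>] show ?thesis by simp
    next
      case False
      then obtain s where "fano_line t \<inter> fano_line 0 = {s}"
        using fano_lines_meet[of t 0] t(1) by auto
      with t same_line[OF \<open>j < m\<close>, of t r s] same_line[OF \<open>j < m\<close>, of 0 s 0]
        \<open>0 \<in> fano_line 0\<close> show ?thesis by auto
    qed
  qed
  have next_copy: "(Suc j, 0) \<in> S \<longleftrightarrow> (j, 0) \<in> S" if "Suc j < m" for j
  proof -
    have "(j, 6) \<in> chain_points m" using that by (simp add: chain_points_def)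
    moreover have "(Suc j, 2) \<in> chain_block m (j, 6)" "(j, 0) \<in> chain_block m (j, 6)"
      using that by (simp_all add: chain_block_def)
    ultimately have "(Suc j, 2) \<in> S \<longleftrightarrow> (j, 0) \<in> S" by (rule same_block)
    with same_copy[of "Suc j" 2] that show ?thesis by simp
  qed
  have first_copy: "(j, 0) \<in> S \<longleftrightarrow> (0, 0) \<in> S" if "j < m" for j
    using that
  proof (induction j)
    case (Suc j)
    then show ?case using next_copy[of j] by simp
  qed simp
  have "p \<in> S \<longleftrightarrow> (0, 0) \<in> S" if "p \<in> chain_points m" for p
  proof -
    obtain j r where p: "p = (j, r)" by (cases p)
    with that have "j < m" "r < 7" by (simp_all add: chain_points_def)
    with same_copy[of j r] first_copy[of j] p show ?thesis by simp
  qed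
  then show "S = {} \<or> S = chain_points m" using S by blast
qed

lemma three_le_card_chain_blocking_set:
  assumes "blocking_set (chain_points m) (chain_blocks m) Q"
  shows "3 * m \<le> card Q"
proof -
  let ?F = "\<lambda>j. {r. (j, r) \<in> Q}"
  have sub: "Q \<subseteq> chain_points m" using assms unfolding blocking_set_def by blast
  then have Q: "Q = (SIGMA j:{..<m}. ?F j)" by (auto simp: chain_points_def)
  have fibre_sub: "?F j \<subseteq> {..<7}" for j using sub by (auto simp: chain_points_def)
  have "3 \<le> card (?F j)" if "j < m" for j
  proof (rule three_le_card_if_meets_kept_lines[OF fibre_sub])
    fix t :: nat assume "t < 6"
    then have "chain_block m (j, t) \<inter> Q \<noteq> {}"
      using assms \<open>j < m\<close> unfolding blocking_set_def chain_blocks_def chain_points_def by auto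
    with \<open>t < 6\<close> show "fano_line t \<inter> ?F j \<noteq> {}" by (auto simp: chain_block_def)
  qed
  then have "(\<Sum>j<m. 3) \<le> (\<Sum>j<m. card (?F j))" by (intro sum_mono) simp
  also have "\<dots> = card Q"
    by (subst Q) (simp add: finite_subset[OF fibre_sub])
  finally show ?thesis by simp
qed

definition alternating_blocking_set :: "nat \<Rightarrow> (nat \<times> nat) set" where
  "alternating_blocking_set m = (SIGMA j:{..<m}. if even j then fano_line 6 else {1, 3, 4})"

lemma card_alternating_blocking_set: "card (alternating_blocking_set m) = 3 * m"
proof -
  have "finite (if even j then fano_line 6 else {1, 3, 4})"
    "card (if even j then fano_line 6 else {1, 3, 4}) = 3" for j :: nat
    by (simp_all add: fano_line_values)
  then show ?thesis by (simp add: alternating_blocking_set_def)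
qed

lemma kept_lines_split_by_alternating_sides:
  assumes "t < 6" and "X = fano_line 6 \<or> X = {1, 3, 4}"
  shows "fano_line t \<inter> X \<noteq> {} \<and> fano_line t - X \<noteq> {}"
proof -
  have "t \<in> {0, 1, 2, 3, 4, 5}" using assms(1) by auto
  with assms(2) show ?thesis by (auto simp: fano_line_def)
qed

lemma parity_changes_within_three:
  fixes j m :: nat assumes "j < m" "2 \<le> m"
  shows "even j \<noteq> even ((j + 1) mod m) \<or> even ((j + 1) mod m) \<noteq> even ((j + 2) mod m)"
proof (cases "j + 1 < m")
  case False
  then have "(j + 1) mod m = 0" "(j + 2) mod m = 1" using assms by (auto simp: mod_if)
  then show ?thesis by simp
qed simp

lemma alternating_blocking_set:
  assumes "2 \<le> m"
  shows "blocking_set (chain_points m) (chain_blocks m) (alternating_blocking_set m)"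
  unfolding blocking_set_def
proof (intro conjI ballI)
  let ?Q = "alternating_blocking_set m"
  show "?Q \<subseteq> chain_points m"
    using fano_line_subset
    by (fastforce simp: alternating_blocking_set_def chain_points_def split: if_splits)
  fix b assume "b \<in> chain_blocks m"
  then obtain j t where jt: "j < m" "t < 7" "b = chain_block m (j, t)"
    by (auto simp: chain_blocks_def chain_points_def)
  have "b \<inter> ?Q \<noteq> {} \<and> b - ?Q \<noteq> {}"
  proof (cases "t < 6")
    case True
    let ?X = "if even j then fano_line 6 else {1, 3, 4}"
    have "b \<inter> ?Q = {j} \<times> (fano_line t \<inter> ?X)" "b - ?Q = {j} \<times> (fano_line t - ?X)"
      using jt True by (auto simp: chain_block_def alternating_blocking_set_def)
    then show ?thesis using kept_lines_split_by_alternating_sides[OF True, of ?X] by simp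
  next
    case False
    have port: "(i, r) \<in> ?Q \<longleftrightarrow> even i" if "i < m" "r \<in> fano_line 6" for i r
      using that by (auto simp: alternating_blocking_set_def fano_line_values)
    have "(j, 0) \<in> b" "((j + 1) mod m, 2) \<in> b" "((j + 2) mod m, 6) \<in> b"
      using jt False by (auto simp: chain_block_def)
    moreover have "(j, 0) \<in> ?Q \<longleftrightarrow> even j" "((j + 1) mod m, 2) \<in> ?Q \<longleftrightarrow> even ((j + 1) mod m)"
      "((j + 2) mod m, 6) \<in> ?Q \<longleftrightarrow> even ((j + 2) mod m)"
      using port jt(1) by (auto simp: fano_line_values)
    ultimately show ?thesis using parity_changes_within_three[OF jt(1) assms] by blast
  qed
  then show "b \<inter> ?Q \<noteq> {}" "b - ?Q \<noteq> {}" by auto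
qed

lemma min_blocking_card_chain:
  assumes "2 \<le> m" shows "min_blocking_card (chain_points m) (chain_blocks m) (3 * m)"
  unfolding min_blocking_card_def
  using alternating_blocking_set[OF assms] card_alternating_blocking_set
    three_le_card_chain_blocking_set by blast

lemma chain_configuration:
  assumes "2 \<le> m"
  shows "\<exists>(P :: nat set) B. connected_config P B \<and> min_blocking_card P B (3 * m) \<and> card P = 7 * m"
proof (intro exI conjI)
  have inj: "inj_on prod_encode (chain_points m)" by (simp add: inj_on_def)
  have sub: "\<forall>b\<in>chain_blocks m. b \<subseteq> chain_points m"
    using chain_block_subset by (auto simp: chain_blocks_def)
  let ?P = "prod_encode ` chain_points m" and ?B = "(`) prod_encode ` chain_blocks m"
  show "connected_config ?P ?B"
    using connected_configI sym_config_image[OF sym_config_chain inj]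
      block_connected_image[OF block_connected_chain sub inj] by blast
  show "min_blocking_card ?P ?B (3 * m)"
    by (rule min_blocking_card_image[OF min_blocking_card_chain[OF assms] sub inj])
  show "card ?P = 7 * m"
    using card_image[OF inj] by (simp add: chain_points_def)
qed

lemma ceiling_seven_thirds_gap:
  assumes "1 \<le> k" obtains m :: nat where "2 \<le> m" "int (3 * m) = \<lceil>real (7 * m) / 3\<rceil> + int k"
proof -
  obtain t where "k = 2 * t \<or> k = 2 * t + 1" by (metis oddE evenE)
  then show thesis
  proof
    assume k: "k = 2 * t"
    have "\<lceil>real (7 * (3 * t)) / 3\<rceil> = int (7 * t)" by (simp add: ceiling_eq_iff)
    with k assms show thesis by (intro that[of "3 * t"]) auto
  next
    assume k: "k = 2 * t + 1"
    have "real (7 * (3 * t + 2)) / 3 = real (7 * t + 4) + 2 / 3" by (simp add: field_simps)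
    then have "\<lceil>real (7 * (3 * t + 2)) / 3\<rceil> = int (7 * t + 5)" by (simp add: ceiling_eq_iff)
    with k show thesis by (intro that[of "3 * t + 2"]) auto
  qed
qed

lemma floor_seven_halves_gap:
  assumes "1 \<le> k" obtains m :: nat where "2 \<le> m" "int (3 * m) = \<lfloor>real (7 * m) / 2\<rfloor> - int k"
proof
  show "2 \<le> 2 * k" using assms by simp
  have "real (7 * (2 * k)) / 2 = real (7 * k)" by simp
  then have "\<lfloor>real (7 * (2 * k)) / 2\<rfloor> = int (7 * k)" by (simp only: floor_of_nat)
  then show "int (3 * (2 * k)) = \<lfloor>real (7 * (2 * k)) / 2\<rfloor> - int k" by simp
qed

theorem mainTheorem6:
  fixes k :: nat
  assumes "k \<ge> 1"
  shows "(\<exists>(P :: nat set) B m. connected_config P B \<and> min_blocking_card P B m \<and>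
            int m = \<lceil>real (card P) / 3\<rceil> + int k)
       \<and> (\<exists>(P :: nat set) B m. connected_config P B \<and> min_blocking_card P B m \<and>
            int m = \<lfloor>real (card P) / 2\<rfloor> - int k)"
proof
  obtain m where "2 \<le> m" "int (3 * m) = \<lceil>real (7 * m) / 3\<rceil> + int k"
    using ceiling_seven_thirds_gap[OF assms] .
  with chain_configuration show "\<exists>(P :: nat set) B m. connected_config P B \<and>
      min_blocking_card P B m \<and> int m = \<lceil>real (card P) / 3\<rceil> + int k" by metis
next
  obtain m where "2 \<le> m" "int (3 * m) = \<lfloor>real (7 * m) / 2\<rfloor> - int k"
    using floor_seven_halves_gap[OF assms] .
  with chain_configuration show "\<exists>(P :: nat set) B m. connected_config P B \<and>
      min_blocking_card P B m \<and> int m = \<lfloor>real (card P) / 2\<rfloor> - int k" by metis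
qed

end
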